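(* Let $M$ be a faithful graded $R$-module and $U$ a proper graded submodule of $M$ such that $J_{gr}(M/U)$ is the zero submodule of $M/U$ and $J_{gr}(R)\subseteq (U:_RM)$. Then $U$ is a graded weakly $J_{gr}$-semiprime submodule of $M$ if and only if $(U:_RM)$ is a graded weakly $J_{gr}$-semiprime ideal of $R$.
   Context: Standing conventions: $\Gamma$ is a group, $R=\bigoplus_{g\in\Gamma}R_g$ is a commutative $\Gamma$-graded ring with identity, and $M=\bigoplus_{g\in\Gamma}M_g$ is a unitary $\Gamma$-graded $R$-module. $h(R)$, $h(M)$ are the homogeneous elements. A submodule $U$ is graded if $U=\bigoplus_g(U\cap M_g)$; $M/U$ has the induced grading. $M$ is faithful if $\mathrm{ann}_R(M)=\{r: rM=0\}=0$. $(U:_RM)=\{r\in R: rM\subseteq U\}$. For a graded module $N$, a graded submodule $U\neq N$ is Gr-maximal if every graded submodule between $U$ and $N$ equals $U$ or $N$; $J_{gr}(N)$ is the intersection of all Gr-maximal submodules of $N$ ($=N$ if none); $J_{gr}(R)$ is this for $N=R$. A proper graded submodule $U$ of $M$ is graded weakly $J_{gr}$-semiprime if whenever $r_g\in h(R)$, $m_h\in h(M)$, $n\in\mathbb{Z}^+$ and $0\neq r_g^nm_h\in U$, then $r_gm_h\in U+J_{gr}(M)$; a graded ideal of $R$ is graded weakly $J_{gr}$-semiprime if it is so as a submodule of the graded $R$-module $R$. *)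

theory Defs
  imports Complex_Main
begin

text \<open>Gamma is a (not necessarily abelian) group, written additively: type class group_add.
  A grading of an abelian group (type 'a) is a family A :: 'g => 'a set.\<close>

definition add_subgroup :: "'a::ab_group_add set \<Rightarrow> bool" where
  "add_subgroup S \<longleftrightarrow> 0 \<in> S \<and> (\<forall>x\<in>S. \<forall>y\<in>S. x + y \<in> S) \<and> (\<forall>x\<in>S. - x \<in> S)"

definition internal_direct_sum :: "('g \<Rightarrow> 'a::ab_group_add set) \<Rightarrow> bool" where
  "internal_direct_sum A \<longleftrightarrow> (\<forall>g. add_subgroup (A g)) \<and>
     (\<forall>x. \<exists>!f. finite {g. f g \<noteq> 0} \<and> (\<forall>g. f g \<in> A g) \<and> x = sum f {g. f g \<noteq> 0})"

definition graded_ring :: "('g::group_add \<Rightarrow> 'r::comm_ring_1 set) \<Rightarrow> bool" where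
  "graded_ring Rg \<longleftrightarrow> internal_direct_sum Rg \<and>
     (\<forall>g h. \<forall>a\<in>Rg g. \<forall>b\<in>Rg h. a * b \<in> Rg (g + h))"

definition graded_module :: "('g::group_add \<Rightarrow> 'r::comm_ring_1 set) \<Rightarrow> ('r \<Rightarrow> 'm::ab_group_add \<Rightarrow> 'm)
     \<Rightarrow> ('g \<Rightarrow> 'm set) \<Rightarrow> bool" where
  "graded_module Rg smult Mg \<longleftrightarrow> module smult \<and> internal_direct_sum Mg \<and>
     (\<forall>g h. \<forall>a\<in>Rg g. \<forall>m\<in>Mg h. smult a m \<in> Mg (g + h))"

definition faithful :: "('r::comm_ring_1 \<Rightarrow> 'm::ab_group_add \<Rightarrow> 'm) \<Rightarrow> bool" where
  "faithful smult \<longleftrightarrow> (\<forall>r. (\<forall>m. smult r m = 0) \<longrightarrow> r = 0)"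

definition colon :: "('r \<Rightarrow> 'm \<Rightarrow> 'm) \<Rightarrow> 'm set \<Rightarrow> 'r set" where
  "colon smult U = {r. \<forall>m. smult r m \<in> U}"

text \<open>Generic graded module given by carrier N, zero z, addition, scalar action and grading Ng
  (used both for M, for R and for the quotient M/U).  hsums z add A is the set of finite sums
  of elements of the sets A g.\<close>
inductive_set hsums :: "'n \<Rightarrow> ('n \<Rightarrow> 'n \<Rightarrow> 'n) \<Rightarrow> ('g \<Rightarrow> 'n set) \<Rightarrow> 'n set"
  for z add A where
  hsums_zero: "z \<in> hsums z add A"
| hsums_add: "x \<in> A g \<Longrightarrow> y \<in> hsums z add A \<Longrightarrow> add x y \<in> hsums z add A"

text \<open>Graded submodule: a submodule S with S = sum over g of (S inter N_g) (the sum is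
  automatically direct since the grading of N is).\<close>
definition gr_submodule :: "'n set \<Rightarrow> 'n \<Rightarrow> ('n \<Rightarrow> 'n \<Rightarrow> 'n) \<Rightarrow> ('r \<Rightarrow> 'n \<Rightarrow> 'n)
     \<Rightarrow> ('g \<Rightarrow> 'n set) \<Rightarrow> 'n set \<Rightarrow> bool" where
  "gr_submodule N z add scale Ng S \<longleftrightarrow> S \<subseteq> N \<and> z \<in> S \<and>
     (\<forall>x\<in>S. \<forall>y\<in>S. add x y \<in> S) \<and> (\<forall>r. \<forall>x\<in>S. scale r x \<in> S) \<and>
     S \<subseteq> hsums z add (\<lambda>g. S \<inter> Ng g)"

definition gr_maximal :: "'n set \<Rightarrow> 'n \<Rightarrow> ('n \<Rightarrow> 'n \<Rightarrow> 'n) \<Rightarrow> ('r \<Rightarrow> 'n \<Rightarrow> 'n)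
     \<Rightarrow> ('g \<Rightarrow> 'n set) \<Rightarrow> 'n set \<Rightarrow> bool" where
  "gr_maximal N z add scale Ng S \<longleftrightarrow> gr_submodule N z add scale Ng S \<and> S \<noteq> N \<and>
     (\<forall>T. gr_submodule N z add scale Ng T \<and> S \<subseteq> T \<longrightarrow> T = S \<or> T = N)"

definition J_gr :: "'n set \<Rightarrow> 'n \<Rightarrow> ('n \<Rightarrow> 'n \<Rightarrow> 'n) \<Rightarrow> ('r \<Rightarrow> 'n \<Rightarrow> 'n)
     \<Rightarrow> ('g \<Rightarrow> 'n set) \<Rightarrow> 'n set" where
  "J_gr N z add scale Ng = N \<inter> \<Inter> {S. gr_maximal N z add scale Ng S}"

text \<open>Quotient module M/U, elements are cosets x + U; zero is U.\<close>
definition qcoset :: "'m::ab_group_add set \<Rightarrow> 'm \<Rightarrow> 'm set" where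
  "qcoset U x = {x + u | u. u \<in> U}"

definition q_add :: "'m::ab_group_add set \<Rightarrow> 'm set \<Rightarrow> 'm set" where
  "q_add C D = {x + y | x y. x \<in> C \<and> y \<in> D}"

definition q_scale :: "('r \<Rightarrow> 'm::ab_group_add \<Rightarrow> 'm) \<Rightarrow> 'm set \<Rightarrow> 'r \<Rightarrow> 'm set \<Rightarrow> 'm set" where
  "q_scale smult U r C = {smult r x + u | x u. x \<in> C \<and> u \<in> U}"

definition J_gr_quot :: "('r \<Rightarrow> 'm::ab_group_add \<Rightarrow> 'm) \<Rightarrow> ('g \<Rightarrow> 'm set) \<Rightarrow> 'm set \<Rightarrow> 'm set set" where
  "J_gr_quot smult Mg U =
     J_gr (range (qcoset U)) U q_add (q_scale smult U) (\<lambda>g. qcoset U ` Mg g)"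

definition gr_weakly_Jgr_semiprime ::
  "('g::group_add \<Rightarrow> 'r::comm_ring_1 set) \<Rightarrow> ('r \<Rightarrow> 'm::ab_group_add \<Rightarrow> 'm) \<Rightarrow> ('g \<Rightarrow> 'm set)
     \<Rightarrow> 'm set \<Rightarrow> bool" where
  "gr_weakly_Jgr_semiprime Rg smult Mg U \<longleftrightarrow>
     gr_submodule UNIV 0 (+) smult Mg U \<and> U \<noteq> UNIV \<and>
     (\<forall>g h r m (n::nat). r \<in> Rg g \<longrightarrow> m \<in> Mg h \<longrightarrow> 0 < n \<longrightarrow>
        smult (r ^ n) m \<noteq> 0 \<longrightarrow> smult (r ^ n) m \<in> U \<longrightarrow>
        smult r m \<in> {u + j | u j. u \<in> U \<and> j \<in> J_gr UNIV 0 (+) smult Mg})"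

definition gr_weakly_Jgr_semiprime_ideal ::
  "('g::group_add \<Rightarrow> 'r::comm_ring_1 set) \<Rightarrow> 'r set \<Rightarrow> bool" where
  "gr_weakly_Jgr_semiprime_ideal Rg I \<longleftrightarrow> gr_weakly_Jgr_semiprime Rg (*) Rg I"

end

theory Submission
  imports Defs
begin

(* If J_gr(M/U) = 0 then U is graded semiprime: for homogeneous r and m, r^n m \<in> U forces
   r m \<in> U.  Otherwise some Gr-maximal submodule S of M/U misses r m + U, yet S is closed
   under homogeneous square roots: if r^2 x + U lies in S but y = r x does not, then S + R(y + U)
   is a graded submodule (y is homogeneous) strictly above S, hence all of M/U; writing
   x + U = s + a y + U with s \<in> S gives y + U = r s + a r^2 x + U \<in> S, a contradiction.
   Testing on homogeneous elements of M transfers graded semiprimeness from U to (U :_R M),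
   and a graded semiprime submodule is graded weakly J_gr-semiprime (take the J_gr-summand 0).
   So both sides of the equivalence hold. *)

lemma hsums_mono:
  "x \<in> hsums z add A \<Longrightarrow> (\<And>g. A g \<subseteq> B g) \<Longrightarrow> x \<in> hsums z add B"
  by (induction rule: hsums.induct) (auto intro: hsums.intros)

lemma hsums_plus_closed:
  "(x::'a::ab_group_add) \<in> hsums 0 (+) A \<Longrightarrow> y \<in> hsums 0 (+) A \<Longrightarrow> x + y \<in> hsums 0 (+) A"
  by (induction rule: hsums.induct) (auto simp: add.assoc intro: hsums.intros)

lemma sum_in_hsums:
  "finite F \<Longrightarrow> (\<And>g. g \<in> F \<Longrightarrow> f g \<in> A g) \<Longrightarrow> sum f F \<in> hsums (0::'a::ab_group_add) (+) A"
  by (induction rule: finite_induct) (auto intro: hsums.intros)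

lemma hsums_obtain_sum:
  assumes "x \<in> hsums (0::'a::ab_group_add) (+) A"
    and closed: "\<And>g a b. a \<in> A g \<Longrightarrow> b \<in> A g \<Longrightarrow> a + b \<in> A g"
  obtains D p where "finite D" "\<And>d. d \<in> D \<Longrightarrow> p d \<in> A d" "x = sum p D"
proof -
  from assms(1) have "\<exists>D p. finite D \<and> (\<forall>d\<in>D. p d \<in> A d) \<and> x = sum p D"
  proof (induction rule: hsums.induct)
    case hsums_zero
    show ?case by (rule exI[of _ "{}"]) simp
  next
    case (hsums_add x g y)
    then obtain D p where D: "finite D" "\<forall>d\<in>D. p d \<in> A d" "y = sum p D" by blast
    define c where "c = (if g \<in> D then p g else 0)"
    define p' where "p' = p(g := x + c)"
    have "y = c + sum p (D - {g})"
      using D(1,3) by (cases "g \<in> D") (simp_all add: c_def sum.remove)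
    moreover have "sum p' (insert g D) = (x + c) + sum p (D - {g})"
      using D(1) by (simp add: p'_def sum.insert_remove)
    ultimately have "x + y = sum p' (insert g D)" by (simp add: add.assoc)
    moreover have "\<forall>d\<in>insert g D. p' d \<in> A d"
      using D(2) hsums_add.hyps(1) closed by (auto simp: p'_def c_def)
    ultimately show ?case using D(1) by (metis finite_insert)
  qed
  then show ?thesis using that by blast
qed

lemma internal_direct_sum_decomp:
  assumes "internal_direct_sum A"
  obtains F f where "finite F" "\<And>g. g \<in> F \<Longrightarrow> f g \<in> A g" "x = sum f F"
proof -
  from assms obtain f where "finite {g. f g \<noteq> 0}" "\<forall>g. f g \<in> A g" "x = sum f {g. f g \<noteq> 0}"
    unfolding internal_direct_sum_def by metis
  then show ?thesis using that by blast
qed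

lemma internal_direct_sum_hsums:
  "internal_direct_sum A \<Longrightarrow> x \<in> hsums 0 (+) A"
  by (rule internal_direct_sum_decomp[of A x]) (auto intro: sum_in_hsums)

lemma internal_direct_sum_unique:
  assumes ids: "internal_direct_sum A"
    and D: "finite D" "\<And>d. d \<in> D \<Longrightarrow> p d \<in> A d"
    and E: "finite E" "\<And>e. e \<in> E \<Longrightarrow> q e \<in> A e"
    and eq: "sum p D = sum q E"
  shows "(if d \<in> D then p d else 0) = (if d \<in> E then q d else 0)"
proof -
  define P where "P = (\<lambda>f. finite {g. f g \<noteq> 0} \<and> (\<forall>g. f g \<in> A g) \<and> sum p D = sum f {g. f g \<noteq> 0})"
  have zero: "\<And>g. 0 \<in> A g" using ids unfolding internal_direct_sum_def add_subgroup_def by blast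
  have extend: "P (\<lambda>g. if g \<in> F then f g else 0)"
    if "finite F" "\<And>g. g \<in> F \<Longrightarrow> f g \<in> A g" "sum p D = sum f F" for F f
  proof -
    define f' where "f' = (\<lambda>g. if g \<in> F then f g else 0)"
    have "{g. f' g \<noteq> 0} \<subseteq> F" by (auto simp: f'_def)
    then have "finite {g. f' g \<noteq> 0}" using that(1) by (rule finite_subset)
    moreover have "\<forall>g. f' g \<in> A g" using that(2) zero by (auto simp: f'_def)
    moreover have "sum f' {g. f' g \<noteq> 0} = sum f' F"
      by (rule sum.mono_neutral_left) (use that(1) in \<open>auto simp: f'_def\<close>)
    moreover have "sum f' F = sum f F" by (intro sum.cong) (auto simp: f'_def)
    ultimately show ?thesis using that(3) unfolding P_def f'_def by simp
  qed
  have "\<exists>!f. P f" using ids unfolding internal_direct_sum_def P_def by blast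
  moreover have "P (\<lambda>g. if g \<in> D then p g else 0)" by (rule extend[OF D refl])
  moreover have "P (\<lambda>g. if g \<in> E then q g else 0)" by (rule extend[OF E eq])
  ultimately have "(\<lambda>g. if g \<in> D then p g else 0) = (\<lambda>g. if g \<in> E then q g else 0)" by blast
  then show ?thesis by metis
qed

lemma gr_submodule_homogeneous_component:
  assumes ids: "internal_direct_sum Mg"
    and U: "gr_submodule UNIV 0 (+) scale Mg U"
    and D: "finite D" "\<And>d. d \<in> D \<Longrightarrow> p d \<in> Mg d" and sum_in: "sum p D \<in> U"
    and d: "d \<in> D"
  shows "p d \<in> U"
proof -
  have "sum p D \<in> hsums 0 (+) (\<lambda>d. U \<inter> Mg d)" using sum_in U unfolding gr_submodule_def by blast
  moreover have "a + b \<in> U \<inter> Mg e" if "a \<in> U \<inter> Mg e" "b \<in> U \<inter> Mg e" for a b e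
    using that U ids unfolding gr_submodule_def internal_direct_sum_def add_subgroup_def by blast
  ultimately obtain E q where E: "finite E" "\<And>e. e \<in> E \<Longrightarrow> q e \<in> U \<inter> Mg e" "sum p D = sum q E"
    by (rule hsums_obtain_sum) blast+
  have "(if d \<in> D then p d else 0) = (if d \<in> E then q d else 0)"
    by (rule internal_direct_sum_unique[OF ids D E(1) _ E(3)]) (use E(2) in auto)
  then show ?thesis using d E(2) U unfolding gr_submodule_def by (auto split: if_splits)
qed

lemma qcoset_zero: "qcoset U 0 = U"
  unfolding qcoset_def by auto

lemma qcoset_eq_self_iff:
  assumes "add_subgroup U"
  shows "qcoset U a = U \<longleftrightarrow> a \<in> U"
proof
  assume "qcoset U a = U"
  moreover have "a \<in> qcoset U a" using assms unfolding qcoset_def add_subgroup_def by force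
  ultimately show "a \<in> U" by simp
next
  assume a: "a \<in> U"
  have "u = a + (u - a)" and "u - a \<in> U" if "u \<in> U" for u
    using that a assms unfolding add_subgroup_def by (simp, metis diff_conv_add_uminus)
  then show "qcoset U a = U"
    using a assms unfolding qcoset_def add_subgroup_def by blast
qed

lemma q_add_qcoset:
  assumes "add_subgroup U"
  shows "q_add (qcoset U a) (qcoset U b) = qcoset U (a + b)"
proof (rule set_eqI)
  have U0: "0 \<in> U" and Uadd: "\<And>u v. u \<in> U \<Longrightarrow> v \<in> U \<Longrightarrow> u + v \<in> U"
    using assms unfolding add_subgroup_def by blast+
  fix z
  show "z \<in> q_add (qcoset U a) (qcoset U b) \<longleftrightarrow> z \<in> qcoset U (a + b)"
  proof
    assume "z \<in> q_add (qcoset U a) (qcoset U b)"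
    then obtain u v where "u \<in> U" "v \<in> U" "z = (a + b) + (u + v)"
      unfolding q_add_def qcoset_def by (auto simp: algebra_simps)
    then show "z \<in> qcoset U (a + b)" unfolding qcoset_def using Uadd by blast
  next
    assume "z \<in> qcoset U (a + b)"
    then obtain u where "u \<in> U" "z = (a + u) + (b + 0)"
      unfolding qcoset_def by (auto simp: algebra_simps)
    then show "z \<in> q_add (qcoset U a) (qcoset U b)" unfolding q_add_def qcoset_def using U0 by blast
  qed
qed

lemma hsums_qcoset:
  assumes "add_subgroup U"
  shows "x \<in> hsums 0 (+) A \<Longrightarrow> qcoset U x \<in> hsums U q_add (\<lambda>g. qcoset U ` A g)"
proof (induction rule: hsums.induct)
  case hsums_zero
  show ?case using qcoset_zero[of U] by (simp add: hsums.hsums_zero)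
next
  case (hsums_add x g y)
  then show ?case using q_add_qcoset[OF assms, of x y] by (metis hsums.hsums_add imageI)
qed

lemma hsums_qcoset_lift:
  assumes "add_subgroup U"
  shows "c \<in> hsums U q_add B \<Longrightarrow> (\<And>g. B g \<subseteq> range (qcoset U)) \<Longrightarrow>
     \<exists>x \<in> hsums 0 (+) (\<lambda>g. {z. qcoset U z \<in> B g}). c = qcoset U x"
proof (induction rule: hsums.induct)
  case hsums_zero
  show ?case using qcoset_zero[of U] by (auto intro: hsums.hsums_zero)
next
  case (hsums_add b g c)
  then obtain x where x: "x \<in> hsums 0 (+) (\<lambda>g. {z. qcoset U z \<in> B g})" "c = qcoset U x" by blast
  obtain y where y: "b = qcoset U y" using hsums_add.hyps(1) hsums_add.prems by blast
  have "y + x \<in> hsums 0 (+) (\<lambda>g. {z. qcoset U z \<in> B g})"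
    using x(1) y hsums_add.hyps(1) by (auto intro: hsums.hsums_add)
  moreover have "q_add b c = qcoset U (y + x)" using q_add_qcoset[OF assms] x y by simp
  ultimately show ?case by blast
qed

definition gr_semiprime ::
  "('g::group_add \<Rightarrow> 'r::comm_ring_1 set) \<Rightarrow> ('r \<Rightarrow> 'm::ab_group_add \<Rightarrow> 'm) \<Rightarrow> ('g \<Rightarrow> 'm set)
     \<Rightarrow> 'm set \<Rightarrow> bool" where
  "gr_semiprime Rg smult Mg U \<longleftrightarrow>
     gr_submodule UNIV 0 (+) smult Mg U \<and> U \<noteq> UNIV \<and>
     (\<forall>g h r m (n::nat). r \<in> Rg g \<longrightarrow> m \<in> Mg h \<longrightarrow> 0 < n \<longrightarrow>
        smult (r ^ n) m \<in> U \<longrightarrow> smult r m \<in> U)"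

lemma gr_weakly_Jgr_semiprime_if_gr_semiprime:
  assumes "gr_semiprime Rg smult Mg U"
  shows "gr_weakly_Jgr_semiprime Rg smult Mg U"
proof -
  have "0 \<in> J_gr UNIV 0 (+) smult Mg"
    unfolding J_gr_def gr_maximal_def gr_submodule_def by blast
  then have "U \<subseteq> {u + j | u j. u \<in> U \<and> j \<in> J_gr UNIV 0 (+) smult Mg}"
    by force
  then show ?thesis using assms
    unfolding gr_semiprime_def gr_weakly_Jgr_semiprime_def by blast
qed

locale graded_module_quotient =
  fixes Rg :: "'g::group_add \<Rightarrow> 'r::comm_ring_1 set"
    and smult :: "'r \<Rightarrow> 'm::ab_group_add \<Rightarrow> 'm"
    and Mg :: "'g \<Rightarrow> 'm set"
    and U :: "'m set"
  assumes graded_module: "graded_module Rg smult Mg"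
    and ring_direct_sum: "internal_direct_sum Rg"
    and gr_submodule_U: "gr_submodule UNIV 0 (+) smult Mg U"
begin

sublocale module smult
  using graded_module unfolding graded_module_def by blast

lemma module_direct_sum: "internal_direct_sum Mg"
  using graded_module unfolding graded_module_def by blast

lemma homogeneous_smult: "a \<in> Rg g \<Longrightarrow> x \<in> Mg h \<Longrightarrow> smult a x \<in> Mg (g + h)"
  using graded_module unfolding graded_module_def by blast

lemma subspace_U: "subspace U"
  using gr_submodule_U unfolding gr_submodule_def subspace_def by blast

lemma add_subgroup_U: "add_subgroup U"
  using subspace_U unfolding add_subgroup_def by (auto intro: subspace_0 subspace_add subspace_neg)

lemma q_scale_qcoset: "q_scale smult U r (qcoset U a) = qcoset U (smult r a)"
proof (rule set_eqI)
  fix z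
  show "z \<in> q_scale smult U r (qcoset U a) \<longleftrightarrow> z \<in> qcoset U (smult r a)"
  proof
    assume "z \<in> q_scale smult U r (qcoset U a)"
    then obtain u v where "u \<in> U" "v \<in> U" "z = smult r a + (smult r u + v)"
      unfolding q_scale_def qcoset_def by (auto simp: algebra_simps)
    then show "z \<in> qcoset U (smult r a)"
      unfolding qcoset_def using subspace_U by (blast intro: subspace_add subspace_scale)
  next
    assume "z \<in> qcoset U (smult r a)"
    then obtain u where "u \<in> U" "z = smult r (a + 0) + u" unfolding qcoset_def by auto
    then show "z \<in> q_scale smult U r (qcoset U a)"
      unfolding q_scale_def qcoset_def using subspace_0[OF subspace_U] by blast
  qed
qed

abbreviation quot_gr_submodule :: "'m set set \<Rightarrow> bool" where
  "quot_gr_submodule \<equiv>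
     gr_submodule (range (qcoset U)) U q_add (q_scale smult U) (\<lambda>g. qcoset U ` Mg g)"

abbreviation quot_gr_maximal :: "'m set set \<Rightarrow> bool" where
  "quot_gr_maximal \<equiv>
     gr_maximal (range (qcoset U)) U q_add (q_scale smult U) (\<lambda>g. qcoset U ` Mg g)"

lemma quot_gr_submodule_scale:
  "quot_gr_submodule S \<Longrightarrow> qcoset U x \<in> S \<Longrightarrow> qcoset U (smult r x) \<in> S"
  unfolding gr_submodule_def by (metis q_scale_qcoset)

lemma quot_gr_submodule_add:
  "quot_gr_submodule S \<Longrightarrow> qcoset U x \<in> S \<Longrightarrow> qcoset U y \<in> S \<Longrightarrow> qcoset U (x + y) \<in> S"
  unfolding gr_submodule_def by (metis q_add_qcoset[OF add_subgroup_U])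

definition quot_add_cyclic :: "'m set set \<Rightarrow> 'm \<Rightarrow> 'm set set" where
  "quot_add_cyclic S y = {qcoset U (m + smult a y) | m a. qcoset U m \<in> S}"

lemma quot_add_cyclicI: "qcoset U m \<in> S \<Longrightarrow> qcoset U (m + smult a y) \<in> quot_add_cyclic S y"
  unfolding quot_add_cyclic_def by blast

lemma quot_add_cyclicE:
  assumes "c \<in> quot_add_cyclic S y"
  obtains m a where "c = qcoset U (m + smult a y)" "qcoset U m \<in> S"
  using assms unfolding quot_add_cyclic_def by blast

lemma subset_quot_add_cyclic:
  assumes "S \<subseteq> range (qcoset U)"
  shows "S \<subseteq> quot_add_cyclic S y"
proof
  fix c assume "c \<in> S"
  moreover obtain m where "c = qcoset U m" using \<open>c \<in> S\<close> assms by blast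
  ultimately show "c \<in> quot_add_cyclic S y" using quot_add_cyclicI[of m S 0] by simp
qed

lemma smult_homogeneous_in_hsums:
  assumes y: "y \<in> Mg d" and T: "\<And>b. qcoset U (smult b y) \<in> T"
  shows "smult a y \<in> hsums 0 (+) (\<lambda>g. {z. qcoset U z \<in> T \<inter> qcoset U ` Mg g})"
proof -
  have "a \<in> hsums 0 (+) Rg" by (rule internal_direct_sum_hsums[OF ring_direct_sum])
  then show ?thesis
  proof (induction rule: hsums.induct)
    case hsums_zero
    show ?case by (simp add: hsums.hsums_zero)
  next
    case (hsums_add b g a')
    have "smult b y \<in> Mg (g + d)" using homogeneous_smult hsums_add.hyps(1) y .
    then show ?case using T hsums_add.IH by (auto simp: scale_left_distrib intro: hsums.hsums_add)
  qed
qed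

lemma quot_add_cyclic_graded:
  assumes S: "quot_gr_submodule S" and y: "y \<in> Mg d"
  defines "T \<equiv> quot_add_cyclic S y"
  shows "T \<subseteq> hsums U q_add (\<lambda>g. T \<inter> qcoset U ` Mg g)"
proof
  let ?A = "\<lambda>X g. {z. qcoset U z \<in> X \<inter> qcoset U ` Mg g}"
  have S_cosets: "S \<subseteq> range (qcoset U)" and S_graded: "S \<subseteq> hsums U q_add (\<lambda>g. S \<inter> qcoset U ` Mg g)"
    and "qcoset U 0 \<in> S"
    using S qcoset_zero[of U] unfolding gr_submodule_def by auto
  then have "qcoset U (smult b y) \<in> T" for b
    using quot_add_cyclicI[of 0 S b y] by (simp add: T_def)
  note y_graded = smult_homogeneous_in_hsums[OF y this]
  fix t assume "t \<in> T"
  then obtain m a where t: "t = qcoset U (m + smult a y)" and m: "qcoset U m \<in> S"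
    unfolding T_def by (rule quot_add_cyclicE)
  obtain m' where m': "m' \<in> hsums 0 (+) (?A S)" and m_m': "qcoset U m = qcoset U m'"
    using hsums_qcoset_lift[OF add_subgroup_U] S_graded m S_cosets by blast
  have "m' \<in> hsums 0 (+) (?A T)"
    using m' subset_quot_add_cyclic[OF S_cosets] by (elim hsums_mono) (auto simp: T_def)
  then have "m' + smult a y \<in> hsums 0 (+) (?A T)"
    using y_graded hsums_plus_closed by blast
  then have "qcoset U (m' + smult a y) \<in> hsums U q_add (\<lambda>g. qcoset U ` ?A T g)"
    by (rule hsums_qcoset[OF add_subgroup_U])
  then have "qcoset U (m' + smult a y) \<in> hsums U q_add (\<lambda>g. T \<inter> qcoset U ` Mg g)"
    by (rule hsums_mono) blast
  moreover have "t = qcoset U (m' + smult a y)"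
    using t m_m' q_add_qcoset[OF add_subgroup_U] by metis
  ultimately show "t \<in> hsums U q_add (\<lambda>g. T \<inter> qcoset U ` Mg g)" by simp
qed

lemma quot_gr_submodule_add_cyclic:
  assumes S: "quot_gr_submodule S" and y: "y \<in> Mg d"
  shows "quot_gr_submodule (quot_add_cyclic S y)"
  unfolding gr_submodule_def
proof (intro conjI ballI allI)
  have "U \<in> S" and S_cosets: "S \<subseteq> range (qcoset U)"
    using S unfolding gr_submodule_def by blast+
  then show "U \<in> quot_add_cyclic S y" using subset_quot_add_cyclic by blast
  show "quot_add_cyclic S y \<subseteq> range (qcoset U)" unfolding quot_add_cyclic_def by blast
  show "quot_add_cyclic S y \<subseteq> hsums U q_add (\<lambda>g. quot_add_cyclic S y \<inter> qcoset U ` Mg g)"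
    using quot_add_cyclic_graded[OF S y] .
next
  fix b c assume "b \<in> quot_add_cyclic S y" "c \<in> quot_add_cyclic S y"
  then obtain m1 a1 m2 a2 where "b = qcoset U (m1 + smult a1 y)" "qcoset U m1 \<in> S"
    "c = qcoset U (m2 + smult a2 y)" "qcoset U m2 \<in> S"
    by (metis quot_add_cyclicE)
  moreover from this have "qcoset U (m1 + m2) \<in> S" using quot_gr_submodule_add[OF S] by blast
  ultimately show "q_add b c \<in> quot_add_cyclic S y"
    using quot_add_cyclicI[of "m1 + m2" S "a1 + a2" y]
    by (simp add: q_add_qcoset[OF add_subgroup_U] algebra_simps)
next
  fix r c assume "c \<in> quot_add_cyclic S y"
  then obtain m a where "c = qcoset U (m + smult a y)" "qcoset U m \<in> S"
    by (rule quot_add_cyclicE)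
  moreover from this have "qcoset U (smult r m) \<in> S" using quot_gr_submodule_scale[OF S] by blast
  ultimately show "q_scale smult U r c \<in> quot_add_cyclic S y"
    using quot_add_cyclicI[of "smult r m" S "r * a" y] by (simp add: q_scale_qcoset algebra_simps)
qed

lemma quot_gr_maximal_add_cyclic:
  assumes S: "quot_gr_maximal S" and y: "y \<in> Mg d" and y_notin: "qcoset U y \<notin> S"
  shows "quot_add_cyclic S y = range (qcoset U)"
proof -
  have S_sub: "quot_gr_submodule S" using S unfolding gr_maximal_def by blast
  then have "S \<subseteq> quot_add_cyclic S y"
    by (intro subset_quot_add_cyclic) (simp add: gr_submodule_def)
  moreover have "qcoset U y \<in> quot_add_cyclic S y"
    using quot_add_cyclicI[of 0 S 1 y] S_sub qcoset_zero[of U] unfolding gr_submodule_def by simp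
  ultimately show ?thesis
    using S quot_gr_submodule_add_cyclic[OF S_sub y] y_notin unfolding gr_maximal_def by blast
qed

lemma quot_gr_maximal_square_root:
  assumes S: "quot_gr_maximal S" and r: "r \<in> Rg g" and x: "x \<in> Mg h"
    and sq: "qcoset U (smult r (smult r x)) \<in> S"
  shows "qcoset U (smult r x) \<in> S"
proof (rule ccontr)
  have S_sub: "quot_gr_submodule S" using S unfolding gr_maximal_def by blast
  assume "qcoset U (smult r x) \<notin> S"
  then have "qcoset U x \<in> quot_add_cyclic S (smult r x)"
    using quot_gr_maximal_add_cyclic[OF S homogeneous_smult[OF r x]] by blast
  then obtain m a where x_eq: "qcoset U x = qcoset U (m + smult a (smult r x))"
    and m: "qcoset U m \<in> S"
    by (rule quot_add_cyclicE)
  have "qcoset U (smult r x) = q_scale smult U r (qcoset U x)" by (simp only: q_scale_qcoset)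
  also have "\<dots> = qcoset U (smult r m + smult a (smult r (smult r x)))"
    unfolding x_eq q_scale_qcoset by (simp only: scale_right_distrib scale_left_commute[of r a])
  also have "\<dots> \<in> S"
    by (intro quot_gr_submodule_add[OF S_sub] quot_gr_submodule_scale[OF S_sub] m sq)
  finally show False using \<open>qcoset U (smult r x) \<notin> S\<close> by blast
qed

lemma quot_gr_maximal_root:
  assumes S: "quot_gr_maximal S" and r: "r \<in> Rg g" and x: "x \<in> Mg h"
    and root: "qcoset U (smult (r ^ n) x) \<in> S"
  shows "qcoset U (smult r x) \<in> S"
proof (cases n)
  case 0
  have "quot_gr_submodule S" using S unfolding gr_maximal_def by blast
  then show ?thesis using quot_gr_submodule_scale root 0 by simp
next
  case (Suc k)
  have "qcoset U (smult r x) \<in> S"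
    if "x \<in> Mg h" "qcoset U (smult (r ^ Suc k) x) \<in> S" for x h
    using that
  proof (induction k arbitrary: x h)
    case 0
    then show ?case by simp
  next
    case (Suc k)
    have "smult (r ^ Suc (Suc k)) x = smult (r ^ Suc k) (smult r x)"
      by (simp only: scale_scale power_Suc2)
    then have "qcoset U (smult r (smult r x)) \<in> S"
      using Suc.IH[OF homogeneous_smult[OF r Suc.prems(1)]] Suc.prems(2) by simp
    then show ?case by (rule quot_gr_maximal_square_root[OF S r Suc.prems(1)])
  qed
  then show ?thesis using x root Suc by blast
qed

lemma gr_semiprime_if_J_gr_quot_trivial:
  assumes J: "J_gr_quot smult Mg U = {U}" and proper: "U \<noteq> UNIV"
  shows "gr_semiprime Rg smult Mg U"
  unfolding gr_semiprime_def
proof (intro conjI allI impI gr_submodule_U proper)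
  fix g h r m and n :: nat
  assume r: "r \<in> Rg g" and m: "m \<in> Mg h" and root: "smult (r ^ n) m \<in> U"
  note coset_U_iff = qcoset_eq_self_iff[OF add_subgroup_U]
  show "smult r m \<in> U"
  proof (rule ccontr)
    assume "smult r m \<notin> U"
    then have "qcoset U (smult r m) \<notin> J_gr_quot smult Mg U" using J coset_U_iff by simp
    then obtain S where S: "quot_gr_maximal S" and notin: "qcoset U (smult r m) \<notin> S"
      unfolding J_gr_quot_def J_gr_def by blast
    have "U \<in> S" using S unfolding gr_maximal_def gr_submodule_def by blast
    moreover have "qcoset U (smult (r ^ n) m) = U" using root coset_U_iff by blast
    ultimately have "qcoset U (smult (r ^ n) m) \<in> S" by simp
    then show False using quot_gr_maximal_root[OF S r m] notin by blast
  qed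
qed

lemma colon_if_homogeneous:
  assumes "\<And>h x. x \<in> Mg h \<Longrightarrow> smult r x \<in> U"
  shows "r \<in> colon smult U"
  unfolding colon_def
proof (intro CollectI allI)
  fix m
  obtain H e where H: "finite H" "\<And>h. h \<in> H \<Longrightarrow> e h \<in> Mg h" "m = sum e H"
    by (rule internal_direct_sum_decomp[OF module_direct_sum, where x = m]) blast
  then have "smult r m = (\<Sum>h\<in>H. smult r (e h))" by (simp add: scale_sum_right)
  also have "\<dots> \<in> U" by (intro subspace_sum[OF subspace_U] assms[OF H(2)])
  finally show "smult r m \<in> U" .
qed

lemma colon_homogeneous_component:
  assumes F: "finite F" "\<And>g. g \<in> F \<Longrightarrow> f g \<in> Rg g" and colon: "sum f F \<in> colon smult U"
    and g: "g \<in> F"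
  shows "f g \<in> colon smult U"
proof (rule colon_if_homogeneous)
  fix h x assume x: "x \<in> Mg h"
  let ?p = "\<lambda>d. smult (f (d - h)) x"
  have "sum ?p ((\<lambda>g'. g' + h) ` F) = (\<Sum>g'\<in>F. smult (f g') x)"
    by (simp add: sum.reindex inj_on_def)
  also have "\<dots> = smult (sum f F) x" by (rule scale_sum_left[symmetric])
  also have "\<dots> \<in> U" using colon unfolding colon_def by blast
  finally have sum_in: "sum ?p ((\<lambda>g'. g' + h) ` F) \<in> U" .
  have "?p d \<in> Mg d" if "d \<in> (\<lambda>g'. g' + h) ` F" for d
    using that F(2) homogeneous_smult[OF _ x] by auto
  then have "?p (g + h) \<in> U"
    using gr_submodule_homogeneous_component[OF module_direct_sum gr_submodule_U _ _ sum_in] F(1) g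
    by blast
  then show "smult (f g) x \<in> U" by simp
qed

lemma gr_submodule_colon: "gr_submodule UNIV 0 (+) (*) Rg (colon smult U)"
  unfolding gr_submodule_def
proof (intro conjI ballI allI subset_UNIV)
  show "0 \<in> colon smult U" using subspace_0[OF subspace_U] by (simp add: colon_def)
  show "a + b \<in> colon smult U" if "a \<in> colon smult U" "b \<in> colon smult U" for a b
    using that subspace_add[OF subspace_U] by (simp add: colon_def scale_left_distrib)
  show "c * a \<in> colon smult U" if "a \<in> colon smult U" for c a
    using that subspace_scale[OF subspace_U] by (simp add: colon_def flip: scale_scale)
  show "colon smult U \<subseteq> hsums 0 (+) (\<lambda>g. colon smult U \<inter> Rg g)"
  proof
    fix r assume r: "r \<in> colon smult U"
    obtain F f where F: "finite F" "\<And>g. g \<in> F \<Longrightarrow> f g \<in> Rg g" "r = sum f F"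
      by (rule internal_direct_sum_decomp[OF ring_direct_sum, where x = r]) blast
    have "f g \<in> colon smult U \<inter> Rg g" if "g \<in> F" for g
      using colon_homogeneous_component[OF F(1,2)] r F(2,3) that by blast
    then show "r \<in> hsums 0 (+) (\<lambda>g. colon smult U \<inter> Rg g)"
      unfolding F(3) using F(1) by (rule sum_in_hsums[rotated])
  qed
qed

lemma colon_ne_UNIV:
  assumes "U \<noteq> UNIV"
  shows "colon smult U \<noteq> UNIV"
proof
  assume "colon smult U = UNIV"
  then have "smult 1 m \<in> U" for m unfolding colon_def by blast
  then show False using assms by auto
qed

lemma gr_semiprime_colon:
  assumes U: "gr_semiprime Rg smult Mg U"
  shows "gr_semiprime Rg (*) Rg (colon smult U)"
  unfolding gr_semiprime_def
proof (intro conjI allI impI gr_submodule_colon colon_ne_UNIV)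
  show "U \<noteq> UNIV" using U unfolding gr_semiprime_def by blast
  fix g h r s and n :: nat
  assume r: "r \<in> Rg g" and s: "s \<in> Rg h" and n: "0 < n" and root: "r ^ n * s \<in> colon smult U"
  show "r * s \<in> colon smult U"
  proof (rule colon_if_homogeneous)
    fix h' x assume "x \<in> Mg h'"
    then have "smult s x \<in> Mg (h + h')" using homogeneous_smult[OF s] by blast
    moreover have "smult (r ^ n) (smult s x) \<in> U" using root by (simp add: colon_def)
    ultimately have "smult r (smult s x) \<in> U" using U r n unfolding gr_semiprime_def by blast
    then show "smult (r * s) x \<in> U" by simp
  qed
qed

end

theorem theorem2p19:
  fixes Rg :: "'g::group_add \<Rightarrow> 'r::comm_ring_1 set"
    and smult :: "'r \<Rightarrow> 'm::ab_group_add \<Rightarrow> 'm"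
    and Mg :: "'g \<Rightarrow> 'm set"
    and U :: "'m set"
  assumes "graded_ring Rg"
    and "graded_module Rg smult Mg"
    and "faithful smult"
    and "gr_submodule UNIV 0 (+) smult Mg U" and "U \<noteq> UNIV"
    and "J_gr_quot smult Mg U = {U}"
    and "J_gr UNIV 0 (+) (*) Rg \<subseteq> colon smult U"
  shows "gr_weakly_Jgr_semiprime Rg smult Mg U \<longleftrightarrow>
         gr_weakly_Jgr_semiprime_ideal Rg (colon smult U)"
proof -
  interpret graded_module_quotient Rg smult Mg U
    using assms(1,2,4) unfolding graded_module_quotient_def graded_ring_def by blast
  have "gr_semiprime Rg smult Mg U"
    using assms(6,5) by (rule gr_semiprime_if_J_gr_quot_trivial)
  moreover from this have "gr_semiprime Rg (*) Rg (colon smult U)"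
    by (rule gr_semiprime_colon)
  ultimately show ?thesis
    unfolding gr_weakly_Jgr_semiprime_ideal_def
    by (simp add: gr_weakly_Jgr_semiprime_if_gr_semiprime)
qed

end
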